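(* Fix an agent $P_i$ and a stage $k$, and let $\mathcal A'$ be the (finite, nonempty) set of arms still available to $P_i$ at stage $k$. Each arm $A_j\in\mathcal A'$ has a score $v_j\in[0,1]$ and a fit $e_{ij}\in[0,1]$. Fix the state $s=s_{i,k}$, which is assumed to be the true state, and write $\pi_j:=\pi_{i,k}(s,v_j)$ and $\delta_j:=\delta_{i,k}(v_j)$. Let $\eta=\eta_{i,k}\ge 0$, let $\gamma=\gamma_i>\max_{j\in\mathcal A'}(v_j+e_{ij})$, and let $Q:=q_i-c$, where $q_i\ge1$ is the quota of $P_i$ and $c\ge 0$ is the number of arms that accepted $P_i$ at earlier stages. Assume $\pi_j>0$, $\eta\delta_j<\pi_j$ and $v_j+e_{ij}>0$ for all $j\in\mathcal A'$, and $0<Q<\sum_{j\in\mathcal A'}\pi_j$. For $\mathcal B\subseteq\mathcal A'$ define the loss $$\mathcal L^\dagger[\mathcal B]=\sum_{j\in\mathcal B}(v_j+e_{ij})\big[\eta\delta_j-\pi_j\big]+\gamma\max\Big\{\sum_{j\in\mathcal B}\pi_j-Q,\;0\Big\}.$$ Let $r_j:=(v_j+e_{ij})(\pi_j-\eta\delta_j)/\pi_j>0$, and for $b\ge0$ let $S(b):=\{j\in\mathcal A': r_j\ge b\}$ and $\Pi(b):=\sum_{j\in S(b)}\pi_j$. Define the greedy set $\widehat{\mathcal B}$ as follows. (i) If $\Pi(b)=Q$ for some $b\ge0$, set $\widehat{\mathcal B}:=S(b)$ and $\mathrm{UE}^\dagger:=0$. (ii) Otherwise let $\mathcal B^+:=\bigcap_{b\ge0:\,\Pi(b)>Q}S(b)$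 and $\mathcal B^-:=\bigcup_{b\ge0:\,\Pi(b)<Q}S(b)$. Set $\widehat{\mathcal B}:=\mathcal B^+$ if $$\sum_{j\in\mathcal B^+\setminus\mathcal B^-}(v_j+e_{ij})(\pi_j-\eta\delta_j)\;\ge\;\gamma\sum_{j\in\mathcal B^+}\pi_j-\gamma Q,$$ and $\widehat{\mathcal B}:=\mathcal B^-$ otherwise; and set $$\mathrm{UE}^\dagger:=\Big[\min_{j\in\mathcal B^-}r_j\Big]\cdot\Big[Q-\sum_{j\in\mathcal B^-}\pi_j\Big],$$ where, if $\mathcal B^-=\emptyset$, the minimum is interpreted as $\max_{j\in\mathcal A'}r_j$. Then $\mathrm{UE}^\dagger\ge0$ and $$\min_{\mathcal B\subseteq\mathcal A'}\mathcal L^\dagger[\mathcal B]\;\le\;\mathcal L^\dagger[\widehat{\mathcal B}]\;\le\;\min_{\mathcal B\subseteq\mathcal A'}\mathcal L^\dagger[\mathcal B]+\mathrm{UE}^\dagger.$$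
   Context: Model: agents $P_1,\dots,P_m$ with quotas $q_i$ pull arms $A_1,\dots,A_n$ over stages. Agent $P_i$'s latent utility for arm $A_j$ is $v_j+e_{ij}$, where $v_j\in[0,1]$ is a score common to all agents and $e_{ij}\in[0,1]$ an agent-specific fit. For a state parameter $s\in[0,1]$, $\pi_{i,k}(s,v)\in[0,1]$ denotes the probability that an arm of score $v$ accepts $P_i$ at stage $k$; it is continuous and strictly increasing in $s$. The uncertainty measure is $\delta_{i,k}(v):=\tfrac12\big[\max_{s\in[0,1]}\pi_{i,k}(s,v)-\min_{s\in[0,1]}\pi_{i,k}(s,v)\big]$. The parameter $\eta_{i,k}\ge0$ is a regularization parameter penalizing uncertainty, and $\gamma_i$ is the marginal penalty for exceeding the quota. *)

theory Defs
  imports "HOL-Analysis.Analysis"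
begin

text \<open>Uncertainty measure: half the range of the acceptance probability over states s in [0,1].
  The first argument of P is the state s, the second the score v.\<close>
definition delta :: "(real \<Rightarrow> real \<Rightarrow> real) \<Rightarrow> real \<Rightarrow> real" where
  "delta P v = (Sup ((\<lambda>s. P s v) ` {0..1}) - Inf ((\<lambda>s. P s v) ` {0..1})) / 2"

text \<open>Loss L-dagger of a set B; u j = v j + e_ij, p j = pi_j, d j = delta_j.\<close>
definition loss :: "('a \<Rightarrow> real) \<Rightarrow> ('a \<Rightarrow> real) \<Rightarrow> ('a \<Rightarrow> real) \<Rightarrow> real \<Rightarrow> real \<Rightarrow> real
    \<Rightarrow> 'a set \<Rightarrow> real" where
  "loss u p d \<eta> \<gamma> Q B =
     (\<Sum>j\<in>B. u j * (\<eta> * d j - p j)) + \<gamma> * max ((\<Sum>j\<in>B. p j) - Q) 0"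

definition ratio :: "('a \<Rightarrow> real) \<Rightarrow> ('a \<Rightarrow> real) \<Rightarrow> ('a \<Rightarrow> real) \<Rightarrow> real \<Rightarrow> 'a \<Rightarrow> real" where
  "ratio u p d \<eta> j = u j * (p j - \<eta> * d j) / p j"

definition Sset :: "'a set \<Rightarrow> ('a \<Rightarrow> real) \<Rightarrow> real \<Rightarrow> 'a set" where
  "Sset A r b = {j \<in> A. r j \<ge> b}"

definition PiS :: "'a set \<Rightarrow> ('a \<Rightarrow> real) \<Rightarrow> ('a \<Rightarrow> real) \<Rightarrow> real \<Rightarrow> real" where
  "PiS A r p b = (\<Sum>j\<in>Sset A r b. p j)"

definition Bplus :: "'a set \<Rightarrow> ('a \<Rightarrow> real) \<Rightarrow> ('a \<Rightarrow> real) \<Rightarrow> real \<Rightarrow> 'a set" where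
  "Bplus A r p Q = \<Inter> {Sset A r b | b. b \<ge> 0 \<and> PiS A r p b > Q}"

definition Bminus :: "'a set \<Rightarrow> ('a \<Rightarrow> real) \<Rightarrow> ('a \<Rightarrow> real) \<Rightarrow> real \<Rightarrow> 'a set" where
  "Bminus A r p Q = \<Union> {Sset A r b | b. b \<ge> 0 \<and> PiS A r p b < Q}"

definition greedy :: "'a set \<Rightarrow> ('a \<Rightarrow> real) \<Rightarrow> ('a \<Rightarrow> real) \<Rightarrow> ('a \<Rightarrow> real) \<Rightarrow> real \<Rightarrow> real
    \<Rightarrow> real \<Rightarrow> 'a set" where
  "greedy A u p d \<eta> \<gamma> Q =
     (let r = ratio u p d \<eta>; Bp = Bplus A r p Q; Bm = Bminus A r p Q in
      if \<exists>b\<ge>0. PiS A r p b = Q then Sset A r (SOME b. b \<ge> 0 \<and> PiS A r p b = Q)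
      else if (\<Sum>j\<in>Bp - Bm. u j * (p j - \<eta> * d j)) \<ge> \<gamma> * (\<Sum>j\<in>Bp. p j) - \<gamma> * Q
      then Bp else Bm)"

definition UE :: "'a set \<Rightarrow> ('a \<Rightarrow> real) \<Rightarrow> ('a \<Rightarrow> real) \<Rightarrow> ('a \<Rightarrow> real) \<Rightarrow> real
    \<Rightarrow> real \<Rightarrow> real" where
  "UE A u p d \<eta> Q =
     (let r = ratio u p d \<eta>; Bm = Bminus A r p Q in
      if \<exists>b\<ge>0. PiS A r p b = Q then 0
      else (if Bm = {} then Max (r ` A) else Min (r ` Bm)) * (Q - (\<Sum>j\<in>Bm. p j)))"

end

theory Submission
  imports Defs
begin

(* With the ratios r j = u j (p j - \<eta> d j) / p j the loss of a set B is
   - \<Sum>_B r p + \<gamma> max (\<Sum>_B p - Q) 0, a fractional knapsack objective with an overflow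
   penalty. For any threshold set S of the ratios (ratios at least \<rho> inside S, at most \<rho>
   outside) and any price 0 \<le> \<rho> \<le> \<gamma>, the Lagrangian value - \<Sum>_S r p - \<rho> (Q - \<Sum>_S p)
   bounds every loss from below. If some threshold set exactly fills the capacity Q, it attains
   this bound. Otherwise B- is the largest threshold set strictly below Q; taking \<rho> to be its
   smallest ratio shows that its loss exceeds the optimum by at most UE, and the greedy rule only
   replaces B- by B+ when this does not increase the loss. *)

lemma sum_shifted_le_threshold_set:
  fixes r p :: "'a \<Rightarrow> real"
  assumes "finite A" "B \<subseteq> A" "S \<subseteq> A"
    and "\<forall>j\<in>S. \<rho> \<le> r j" "\<forall>j\<in>A - S. r j \<le> \<rho>" "\<forall>j\<in>A. 0 \<le> p j"
  shows "(\<Sum>j\<in>B. (r j - \<rho>) * p j) \<le> (\<Sum>j\<in>S. (r j - \<rho>) * p j)"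
proof -
  let ?f = "\<lambda>j. (r j - \<rho>) * p j"
  have fin: "finite B" "finite S" using assms(1-3) finite_subset by blast+
  have "(\<Sum>j\<in>B. ?f j) = (\<Sum>j\<in>B \<inter> S. ?f j) + (\<Sum>j\<in>B - S. ?f j)"
    using fin by (simp add: sum.Int_Diff)
  also have "(\<Sum>j\<in>B - S. ?f j) \<le> 0"
    using assms(2,5,6) by (intro sum_nonpos mult_nonpos_nonneg) auto
  also have "(\<Sum>j\<in>B \<inter> S. ?f j) \<le> (\<Sum>j\<in>S. ?f j)"
    using fin assms(3,4,6) by (intro sum_mono2) auto
  finally show ?thesis by simp
qed

lemma threshold_set_lower_bound:
  fixes r p :: "'a \<Rightarrow> real"
  assumes "finite A" "B \<subseteq> A" "S \<subseteq> A" "0 \<le> \<rho>" "\<rho> \<le> \<gamma>"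
    and "\<forall>j\<in>S. \<rho> \<le> r j" "\<forall>j\<in>A - S. r j \<le> \<rho>" "\<forall>j\<in>A. 0 \<le> p j"
  shows "- (\<Sum>j\<in>S. r j * p j) - \<rho> * (Q - (\<Sum>j\<in>S. p j))
    \<le> - (\<Sum>j\<in>B. r j * p j) + \<gamma> * max ((\<Sum>j\<in>B. p j) - Q) 0"
proof -
  have "(\<Sum>j\<in>B. (r j - \<rho>) * p j) \<le> (\<Sum>j\<in>S. (r j - \<rho>) * p j)"
    using assms by (intro sum_shifted_le_threshold_set) auto
  moreover have "\<rho> * ((\<Sum>j\<in>B. p j) - Q) \<le> \<gamma> * max ((\<Sum>j\<in>B. p j) - Q) 0"
    using assms(4,5) by (cases "(\<Sum>j\<in>B. p j) - Q \<ge> 0")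
      (auto intro: mult_right_mono mult_nonneg_nonpos)
  ultimately show ?thesis
    by (simp add: algebra_simps sum_subtractf sum_distrib_left)
qed

lemma Sset_antimono: "b \<le> b' \<Longrightarrow> Sset A r b' \<subseteq> Sset A r b"
  by (auto simp: Sset_def)

lemma PiS_antimono:
  assumes "finite A" "\<forall>j\<in>A. 0 \<le> p j" "b \<le> b'"
  shows "PiS A r p b' \<le> PiS A r p b"
  unfolding PiS_def using assms Sset_antimono[OF assms(3)]
  by (intro sum_mono2) (auto simp: Sset_def)

lemma Bminus_subset_Bplus:
  assumes "finite A" "\<forall>j\<in>A. 0 \<le> p j"
  shows "Bminus A r p Q \<subseteq> Bplus A r p Q"
proof
  fix j assume "j \<in> Bminus A r p Q"
  then obtain b where b: "PiS A r p b < Q" "j \<in> Sset A r b"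
    unfolding Bminus_def by blast
  have "j \<in> Sset A r b'" if "Q < PiS A r p b'" for b'
  proof -
    have "b' \<le> b"
    proof (rule ccontr)
      assume "\<not> b' \<le> b"
      then have "PiS A r p b' \<le> PiS A r p b" by (intro PiS_antimono[OF assms]) simp
      then show False using b(1) that by linarith
    qed
    then show ?thesis using Sset_antimono[of b' b A r] b(2) by blast
  qed
  then show "j \<in> Bplus A r p Q" unfolding Bplus_def by blast
qed

(* Being a union of a chain of threshold sets, a nonempty B- is itself the threshold set of its
   smallest ratio. *)

lemma Bminus_threshold:
  fixes r p :: "'a \<Rightarrow> real"
  assumes "finite A" "A \<noteq> {}" "0 < Q"
  defines "Bm \<equiv> Bminus A r p Q"
  defines "m \<equiv> if Bm = {} then Max (r ` A) else Min (r ` Bm)"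
  shows "Bm \<subseteq> A" "m \<in> r ` A" "\<forall>j\<in>Bm. m \<le> r j" "\<forall>j\<in>A - Bm. r j \<le> m"
    "(\<Sum>j\<in>Bm. p j) < Q"
proof -
  show BmA: "Bm \<subseteq> A" unfolding Bm_def Bminus_def Sset_def by blast
  have "m \<in> r ` A \<and> (\<forall>j\<in>Bm. m \<le> r j) \<and> (\<forall>j\<in>A - Bm. r j \<le> m) \<and> (\<Sum>j\<in>Bm. p j) < Q"
  proof (cases "Bm = {}")
    case True
    then show ?thesis using assms(1-3) by (auto simp: m_def)
  next
    case False
    have finBm: "finite Bm" using BmA assms(1) finite_subset by blast
    have "Min (r ` Bm) \<in> r ` Bm" using finBm False by simp
    then obtain i where i: "i \<in> Bm" "m = r i" using False by (auto simp: m_def)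
    then obtain b where b: "b \<ge> 0" "PiS A r p b < Q" "i \<in> Sset A r b"
      unfolding Bm_def Bminus_def by blast
    have m_le: "\<forall>j\<in>Bm. m \<le> r j" using finBm False by (simp add: m_def)
    have Bm_eq: "Bm = Sset A r b"
    proof
      show "Sset A r b \<subseteq> Bm" unfolding Bm_def Bminus_def using b by blast
      show "Bm \<subseteq> Sset A r b" using m_le i b BmA by (force simp: Sset_def)
    qed
    have "\<forall>j\<in>A - Bm. r j \<le> m" using Bm_eq i b by (auto simp: Sset_def)
    then show ?thesis using m_le i BmA b Bm_eq by (auto simp: PiS_def)
  qed
  then show "m \<in> r ` A" "\<forall>j\<in>Bm. m \<le> r j" "\<forall>j\<in>A - Bm. r j \<le> m" "(\<Sum>j\<in>Bm. p j) < Q"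
    by auto
qed

lemma Min_image_near_optimal:
  fixes f :: "'a \<Rightarrow> real"
  assumes "finite X" "x \<in> X" "\<forall>y\<in>X. f x \<le> f y + E"
  shows "Min (f ` X) \<le> f x \<and> f x \<le> Min (f ` X) + E"
proof -
  have "Min (f ` X) \<in> f ` X" using assms(1,2) by (intro Min_in) auto
  then obtain y where "y \<in> X" "Min (f ` X) = f y" by blast
  then show ?thesis using assms Min_le[of "f ` X" "f x"] by force
qed

lemma delta_nonneg:
  assumes "\<forall>t\<in>{0..1}. P t v \<in> {0..1}"
  shows "0 \<le> delta P v"
proof -
  let ?X = "(\<lambda>t. P t v) ` {0..1::real}"
  have "bdd_above ?X" "bdd_below ?X"
    using assms by (auto intro!: bdd_aboveI[of _ 1] bdd_belowI[of _ 0])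
  then have "Inf ?X \<le> Sup ?X" by (intro cInf_le_cSup) auto
  then show ?thesis by (simp add: delta_def)
qed

locale greedy_knapsack =
  fixes A :: "'a set" and u p d :: "'a \<Rightarrow> real" and \<eta> \<gamma> Q :: real
  assumes finite_A: "finite A" and A_ne: "A \<noteq> {}"
    and p_pos: "\<forall>j\<in>A. 0 < p j" and u_pos: "\<forall>j\<in>A. 0 < u j" and d_nonneg: "\<forall>j\<in>A. 0 \<le> d j"
    and \<eta>_nonneg: "0 \<le> \<eta>" and \<eta>d_less: "\<forall>j\<in>A. \<eta> * d j < p j" and u_less: "\<forall>j\<in>A. u j < \<gamma>"
    and Q_pos: "0 < Q" and Q_less: "Q < (\<Sum>j\<in>A. p j)"
begin

abbreviation "r \<equiv> ratio u p d \<eta>"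
abbreviation "L \<equiv> loss u p d \<eta> \<gamma> Q"

lemma ratio_times_p: "j \<in> A \<Longrightarrow> r j * p j = u j * (p j - \<eta> * d j)"
  using p_pos by (auto simp: ratio_def)

lemma ratio_pos: "j \<in> A \<Longrightarrow> 0 < r j"
  using p_pos u_pos \<eta>d_less by (simp add: ratio_def)

lemma ratio_less_gamma: "j \<in> A \<Longrightarrow> r j < \<gamma>"
proof -
  assume j: "j \<in> A"
  then have "u j * (p j - \<eta> * d j) \<le> u j * p j"
    using u_pos d_nonneg \<eta>_nonneg by (simp add: mult_left_mono)
  then have "r j \<le> u j" using j p_pos by (simp add: ratio_def divide_simps)
  then show ?thesis using u_less j by force
qed

lemma gamma_pos: "0 < \<gamma>"
proof -
  obtain j where "j \<in> A" using A_ne by blast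
  then have "0 < u j" "u j < \<gamma>" using u_pos u_less by auto
  then show ?thesis by linarith
qed

lemma loss_ratio_form:
  assumes "B \<subseteq> A"
  shows "L B = - (\<Sum>j\<in>B. r j * p j) + \<gamma> * max ((\<Sum>j\<in>B. p j) - Q) 0"
proof -
  have "u j * (\<eta> * d j - p j) = - (r j * p j)" if "j \<in> B" for j
  proof -
    have "j \<in> A" using that assms by blast
    then show ?thesis unfolding ratio_times_p[OF \<open>j \<in> A\<close>] by (simp add: algebra_simps)
  qed
  then have "(\<Sum>j\<in>B. u j * (\<eta> * d j - p j)) = (\<Sum>j\<in>B. - (r j * p j))"
    by (intro sum.cong) auto
  then show ?thesis by (simp add: loss_def sum_negf)
qed

lemma loss_threshold_lower_bound:
  assumes "B \<subseteq> A" "S \<subseteq> A" "0 \<le> \<rho>" "\<rho> \<le> \<gamma>"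
    and "\<forall>j\<in>S. \<rho> \<le> r j" "\<forall>j\<in>A - S. r j \<le> \<rho>"
  shows "- (\<Sum>j\<in>S. r j * p j) - \<rho> * (Q - (\<Sum>j\<in>S. p j)) \<le> L B"
  using threshold_set_lower_bound[OF finite_A assms(1-6)] p_pos loss_ratio_form[OF assms(1)]
  by (simp add: less_imp_le)

lemma greedy_exact:
  assumes "\<exists>b\<ge>0. PiS A r p b = Q"
  shows "greedy A u p d \<eta> \<gamma> Q \<subseteq> A" "UE A u p d \<eta> Q = 0"
    "\<forall>B\<subseteq>A. L (greedy A u p d \<eta> \<gamma> Q) \<le> L B"
proof -
  define b where "b = (SOME b. b \<ge> 0 \<and> PiS A r p b = Q)"
  have b: "b \<ge> 0" "PiS A r p b = Q"
    using someI_ex[OF assms] unfolding b_def by auto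
  have greedy: "greedy A u p d \<eta> \<gamma> Q = Sset A r b"
    using assms by (simp add: greedy_def Let_def b_def)
  show "UE A u p d \<eta> Q = 0" using assms by (simp add: UE_def)
  have SA: "Sset A r b \<subseteq> A" by (auto simp: Sset_def)
  then show "greedy A u p d \<eta> \<gamma> Q \<subseteq> A" using greedy by simp
  have sum_eq: "(\<Sum>j\<in>Sset A r b. p j) = Q" using b by (simp add: PiS_def)
  then obtain j where "j \<in> Sset A r b" using Q_pos by force
  then have "b \<le> \<gamma>" using ratio_less_gamma by (force simp: Sset_def)
  then have "- (\<Sum>j\<in>Sset A r b. r j * p j) - b * (Q - (\<Sum>j\<in>Sset A r b. p j)) \<le> L B"
    if "B \<subseteq> A" for B
    using that SA b by (intro loss_threshold_lower_bound) (auto simp: Sset_def)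
  then show "\<forall>B\<subseteq>A. L (greedy A u p d \<eta> \<gamma> Q) \<le> L B"
    using greedy sum_eq loss_ratio_form[OF SA] by simp
qed

lemma loss_Bplus_le_Bminus:
  defines "Bp \<equiv> Bplus A r p Q" and "Bm \<equiv> Bminus A r p Q"
  assumes "Bp \<subseteq> A" "(\<Sum>j\<in>Bm. p j) < Q"
    and "(\<Sum>j\<in>Bp - Bm. u j * (p j - \<eta> * d j)) \<ge> \<gamma> * (\<Sum>j\<in>Bp. p j) - \<gamma> * Q"
  shows "L Bp \<le> L Bm"
proof -
  have BmBp: "Bm \<subseteq> Bp"
    unfolding Bm_def Bp_def using finite_A p_pos by (intro Bminus_subset_Bplus) auto
  have split: "(\<Sum>j\<in>Bp. r j * p j) = (\<Sum>j\<in>Bm. r j * p j) + (\<Sum>j\<in>Bp - Bm. r j * p j)"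
    using sum.subset_diff[OF BmBp finite_subset[OF assms(3) finite_A], of "\<lambda>j. r j * p j"]
    by simp
  have gain: "(\<Sum>j\<in>Bp - Bm. r j * p j) = (\<Sum>j\<in>Bp - Bm. u j * (p j - \<eta> * d j))"
    using assms(3) by (intro sum.cong) (auto simp: ratio_times_p)
  have "0 < r j * p j" if "j \<in> Bp" for j
    using that assms(3) ratio_pos p_pos by auto
  then have "0 \<le> (\<Sum>j\<in>Bp - Bm. r j * p j)" by (intro sum_nonneg less_imp_le) auto
  then have "\<gamma> * max ((\<Sum>j\<in>Bp. p j) - Q) 0 \<le> (\<Sum>j\<in>Bp - Bm. r j * p j)"
    using gain assms(5) gamma_pos by (simp add: max_mult_distrib_left right_diff_distrib)
  moreover have "L Bm = - (\<Sum>j\<in>Bm. r j * p j)"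
    using loss_ratio_form BmBp assms(3,4) by simp
  ultimately show ?thesis using loss_ratio_form[OF assms(3)] split by linarith
qed

lemma greedy_gap:
  assumes "\<not> (\<exists>b\<ge>0. PiS A r p b = Q)"
  shows "greedy A u p d \<eta> \<gamma> Q \<subseteq> A" "0 \<le> UE A u p d \<eta> Q"
    "\<forall>B\<subseteq>A. L (greedy A u p d \<eta> \<gamma> Q) \<le> L B + UE A u p d \<eta> Q"
proof -
  define Bp where "Bp = Bplus A r p Q"
  define Bm where "Bm = Bminus A r p Q"
  define m where "m = (if Bm = {} then Max (r ` A) else Min (r ` Bm))"
  note Bm = Bminus_threshold[OF finite_A A_ne Q_pos, where r = r and p = p,
      folded Bm_def, folded m_def]
  have greedy: "greedy A u p d \<eta> \<gamma> Q = (if (\<Sum>j\<in>Bp - Bm. u j * (p j - \<eta> * d j))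
      \<ge> \<gamma> * (\<Sum>j\<in>Bp. p j) - \<gamma> * Q then Bp else Bm)"
    using assms by (simp add: greedy_def Let_def Bp_def Bm_def del: not_ex)
  have UE: "UE A u p d \<eta> Q = m * (Q - (\<Sum>j\<in>Bm. p j))"
    using assms by (simp add: UE_def Let_def Bm_def m_def del: not_ex)
  have "Sset A r 0 = A" using ratio_pos by (force simp: Sset_def)
  moreover have "Sset A r 0 \<in> {Sset A r b | b. b \<ge> 0 \<and> PiS A r p b > Q}"
    using calculation Q_less by (intro CollectI exI[of _ 0]) (simp add: PiS_def)
  ultimately have "Bp \<subseteq> A" unfolding Bp_def Bplus_def by blast
  then have greedy_le: "L (greedy A u p d \<eta> \<gamma> Q) \<le> L Bm"
    using loss_Bplus_le_Bminus Bm(5) by (simp add: greedy Bp_def Bm_def)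
  have m: "0 \<le> m" "m \<le> \<gamma>"
    using Bm(2) ratio_pos ratio_less_gamma by (auto intro: less_imp_le)
  have Bm_near: "L Bm \<le> L B + UE A u p d \<eta> Q" if "B \<subseteq> A" for B
    using loss_threshold_lower_bound[OF that Bm(1) m Bm(3,4)] loss_ratio_form[OF Bm(1)] Bm(5)
    by (simp add: UE)
  show "\<forall>B\<subseteq>A. L (greedy A u p d \<eta> \<gamma> Q) \<le> L B + UE A u p d \<eta> Q"
    using order.trans[OF greedy_le Bm_near] by blast
  show "0 \<le> UE A u p d \<eta> Q" using m Bm(5) by (simp add: UE)
  show "greedy A u p d \<eta> \<gamma> Q \<subseteq> A" using \<open>Bp \<subseteq> A\<close> Bm(1) by (simp add: greedy)
qed

theorem greedy_near_optimal:
  "0 \<le> UE A u p d \<eta> Q \<and> Min (L ` Pow A) \<le> L (greedy A u p d \<eta> \<gamma> Q)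
    \<and> L (greedy A u p d \<eta> \<gamma> Q) \<le> Min (L ` Pow A) + UE A u p d \<eta> Q"
proof -
  have "greedy A u p d \<eta> \<gamma> Q \<subseteq> A \<and> 0 \<le> UE A u p d \<eta> Q
    \<and> (\<forall>B\<subseteq>A. L (greedy A u p d \<eta> \<gamma> Q) \<le> L B + UE A u p d \<eta> Q)"
  proof (cases "\<exists>b\<ge>0. PiS A r p b = Q")
    case True
    then show ?thesis using greedy_exact[OF True] by simp
  next
    case False
    then show ?thesis using greedy_gap[OF False] by blast
  qed
  then show ?thesis
    using Min_image_near_optimal[of "Pow A" "greedy A u p d \<eta> \<gamma> Q" L "UE A u p d \<eta> Q"] finite_A
    by simp
qed

end

theorem theorem2:
  fixes A :: "'a set" and v e :: "'a \<Rightarrow> real" and P :: "real \<Rightarrow> real \<Rightarrow> real"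
    and s \<eta> \<gamma> :: real and q c :: nat
  assumes "finite A" and "A \<noteq> {}"
    and "\<forall>j\<in>A. v j \<in> {0..1} \<and> e j \<in> {0..1}"
    and "\<forall>x\<in>{0..1}. continuous_on {0..1} (\<lambda>t. P t x)"
    and "\<forall>x\<in>{0..1}. strict_mono_on {0..1} (\<lambda>t. P t x)"
    and "\<forall>t\<in>{0..1}. \<forall>x\<in>{0..1}. P t x \<in> {0..1}"
    and "s \<in> {0..1}"
    and "\<eta> \<ge> 0"
    and "\<gamma> > Max ((\<lambda>j. v j + e j) ` A)"
    and "q \<ge> 1"
    and "\<forall>j\<in>A. P s (v j) > 0"
    and "\<forall>j\<in>A. \<eta> * delta P (v j) < P s (v j)"
    and "\<forall>j\<in>A. v j + e j > 0"
    and "0 < real q - real c"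
    and "real q - real c < (\<Sum>j\<in>A. P s (v j))"
  shows "let u = (\<lambda>j. v j + e j); p = (\<lambda>j. P s (v j)); d = (\<lambda>j. delta P (v j));
             Q = real q - real c; L = loss u p d \<eta> \<gamma> Q;
             Bh = greedy A u p d \<eta> \<gamma> Q; E = UE A u p d \<eta> Q in
         E \<ge> 0 \<and> Min (L ` Pow A) \<le> L Bh \<and> L Bh \<le> Min (L ` Pow A) + E"
proof -
  have "\<forall>j\<in>A. 0 \<le> delta P (v j)"
    using assms(3,6) by (auto intro: delta_nonneg)
  moreover have "\<forall>j\<in>A. v j + e j < \<gamma>"
  proof
    fix j assume "j \<in> A"
    then have "v j + e j \<le> Max ((\<lambda>j. v j + e j) ` A)" using assms(1) by simp
    then show "v j + e j < \<gamma>" using assms(9) by linarith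
  qed
  ultimately interpret greedy_knapsack A "\<lambda>j. v j + e j" "\<lambda>j. P s (v j)" "\<lambda>j. delta P (v j)"
    \<eta> \<gamma> "real q - real c"
    using assms(1,2,8,11-15) by unfold_locales auto
  show ?thesis unfolding Let_def by (rule greedy_near_optimal)
qed

end
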